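(* For every $m\in\mathbb{N}$, the matrix \[ \mathrm{B}_m=\begin{pmatrix} 1 & m & 2m & m\\ 0 & 1 & 3 & 3\\ 0 & 0 & 1 & 3\\ 0 & 0 & 0 & 1 \end{pmatrix} \] is mutation equivalent to the matrix \[ \mathrm{B}'_m=\begin{pmatrix} 1 & 3 & 6 & m\\ 0 & 1 & 3 & m\\ 0 & 0 & 1 & m\\ 0 & 0 & 0 & 1 \end{pmatrix}. \]
   Context: An upper unitriangular integer $n\times n$ matrix $M$ is viewed as the Gram matrix $M_{ij}=\langle e_i,e_j\rangle$ of a bilinear form on $\mathbb{Z}^n$ with respect to an ordered basis $(e_1,\dots,e_n)$. The signed braid group $\Sigma\mathrm{B}_n=\mathrm{B}_n\rtimes(\mathbb{Z}/2\mathbb{Z})^n$, with generators $\sigma_1,\dots,\sigma_{n-1}$ and $\epsilon_1,\dots,\epsilon_n$, acts on such ordered bases: $\sigma_i$ sends $(e_1,\dots,e_n)$ to $(e_1,\dots,e_{i-1},e_{i+1}-\langle e_i,e_{i+1}\rangle e_i,e_i,e_{i+2},\dots,e_n)$, and $\epsilon_i$ replaces $e_i$ by $-e_i$. Two matrices are mutation equivalent if one is the Gram matrix of a basis obtained from a basis with the other Gram matrix by the action of an element of $\Sigma\mathrm{B}_n$. *)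

theory Defs
  imports Main
begin

text \<open>Vectors of Z^n are functions nat => int (coordinates 0..n-1 used);
  n x n integer matrices are functions nat => nat => int (entries i,j < n used);
  an ordered family of n vectors is a function nat => (nat => int).\<close>

type_synonym zvec = "nat \<Rightarrow> int"
type_synonym zmat = "nat \<Rightarrow> nat \<Rightarrow> int"

definition list_mat :: "int list list \<Rightarrow> zmat" where
  "list_mat xss i j = xss ! i ! j"

definition bil :: "nat \<Rightarrow> zmat \<Rightarrow> zvec \<Rightarrow> zvec \<Rightarrow> int" where
  "bil n M x y = (\<Sum>i<n. \<Sum>j<n. x i * M i j * y j)"

definition std_basis :: "nat \<Rightarrow> zvec" where
  "std_basis i = (\<lambda>k. if k = i then 1 else 0)"

definition gram :: "nat \<Rightarrow> zmat \<Rightarrow> (nat \<Rightarrow> zvec) \<Rightarrow> zmat" where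
  "gram n M b = (\<lambda>i j. bil n M (b i) (b j))"

text \<open>Generators of the signed braid group (0-based indices):
  Sig i = sigma_(i+1), SigInv i = its inverse, Eps i = epsilon_(i+1).\<close>
datatype gen = Sig nat | SigInv nat | Eps nat

fun valid_gen :: "nat \<Rightarrow> gen \<Rightarrow> bool" where
  "valid_gen n (Sig i) = (i + 1 < n)"
| "valid_gen n (SigInv i) = (i + 1 < n)"
| "valid_gen n (Eps i) = (i < n)"

fun act_gen :: "nat \<Rightarrow> zmat \<Rightarrow> gen \<Rightarrow> (nat \<Rightarrow> zvec) \<Rightarrow> (nat \<Rightarrow> zvec)" where
  "act_gen n M (Sig i) b =
     (\<lambda>k. if k = i then (\<lambda>t. b (i+1) t - bil n M (b i) (b (i+1)) * b i t)
          else if k = i + 1 then b i else b k)"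
| "act_gen n M (SigInv i) b =
     (\<lambda>k. if k = i then b (i+1)
          else if k = i + 1 then (\<lambda>t. b i t - bil n M (b i) (b (i+1)) * b (i+1) t)
          else b k)"
| "act_gen n M (Eps i) b = (\<lambda>k. if k = i then (\<lambda>t. - b i t) else b k)"

definition act_word :: "nat \<Rightarrow> zmat \<Rightarrow> gen list \<Rightarrow> (nat \<Rightarrow> zvec) \<Rightarrow> (nat \<Rightarrow> zvec)" where
  "act_word n M w b = fold (act_gen n M) w b"

definition obtained_from :: "nat \<Rightarrow> zmat \<Rightarrow> zmat \<Rightarrow> bool" where
  "obtained_from n M N \<longleftrightarrow>
     (\<exists>w. (\<forall>g\<in>set w. valid_gen n g) \<and>
          (\<forall>i<n. \<forall>j<n. gram n M (act_word n M w std_basis) i j = N i j))"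

definition mutation_equivalent :: "nat \<Rightarrow> zmat \<Rightarrow> zmat \<Rightarrow> bool" where
  "mutation_equivalent n M N \<longleftrightarrow> obtained_from n M N \<or> obtained_from n N M"

end

theory Submission
  imports Defs
begin

text \<open>The word \<open>\<sigma>\<^sub>1 \<sigma>\<^sub>2 \<sigma>\<^sub>1 \<sigma>\<^sub>3 \<epsilon>\<^sub>1 \<epsilon>\<^sub>4\<close>
  carries the standard basis \<open>e\<^sub>1, \<dots>, e\<^sub>4\<close> of the form with Gram matrix
  \<open>B\<^sub>m\<close> to \<open>(-m e\<^sub>1 + 3 e\<^sub>2 - e\<^sub>3, -m e\<^sub>1 + e\<^sub>2, -m e\<^sub>1 + e\<^sub>4, -e\<^sub>1)\<close>,
  and a direct computation shows that the Gram matrix of this basis is \<open>B'\<^sub>m\<close>.\<close>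

definition vec4 :: "int \<Rightarrow> int \<Rightarrow> int \<Rightarrow> int \<Rightarrow> zvec" where
  "vec4 a b c d = (\<lambda>t. if t = 0 then a else if t = 1 then b else if t = 2 then c
                        else if t = 3 then d else 0)"

text \<open>Only the first four vectors matter; the rest are filled with the standard basis
  so that \<open>std_basis\<close> itself is of this form.\<close>
definition basis4 :: "zvec \<Rightarrow> zvec \<Rightarrow> zvec \<Rightarrow> zvec \<Rightarrow> nat \<Rightarrow> zvec" where
  "basis4 v0 v1 v2 v3 = (\<lambda>k. if k = 0 then v0 else if k = 1 then v1 else if k = 2 then v2
                              else if k = 3 then v3 else std_basis k)"

abbreviation B :: "nat \<Rightarrow> zmat" where
  "B m \<equiv> list_mat [[1, int m, 2 * int m, int m],
                   [0, 1, 3, 3],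
                   [0, 0, 1, 3],
                   [0, 0, 0, 1]]"

abbreviation B' :: "nat \<Rightarrow> zmat" where
  "B' m \<equiv> list_mat [[1, 3, 6, int m],
                    [0, 1, 3, int m],
                    [0, 0, 1, int m],
                    [0, 0, 0, 1]]"

abbreviation mutation_word :: "gen list" where
  "mutation_word \<equiv> [Sig 0, Sig 1, Sig 0, Sig 2, Eps 0, Eps 3]"

lemma sum_lessThan_4: "(\<Sum>i<(4::nat). f i) = f 0 + f 1 + f 2 + (f 3 :: 'a::comm_monoid_add)"
  by (simp add: numeral_eq_Suc add.assoc)

lemma less_4_cases: "(i::nat) < 4 \<longleftrightarrow> i = 0 \<or> i = 1 \<or> i = 2 \<or> i = 3"
  by auto

lemma std_basis_eq_basis4:
  "std_basis = basis4 (vec4 1 0 0 0) (vec4 0 1 0 0) (vec4 0 0 1 0) (vec4 0 0 0 1)"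
  by (auto simp: basis4_def vec4_def std_basis_def fun_eq_iff)

lemma uminus_vec4: "(\<lambda>t. - vec4 a b c d t) = vec4 (- a) (- b) (- c) (- d)"
  by (auto simp: vec4_def fun_eq_iff)

lemma diff_smult_vec4:
  "(\<lambda>t. vec4 a b c d t - x * vec4 a' b' c' d' t) =
     vec4 (a - x * a') (b - x * b') (c - x * c') (d - x * d')"
  by (auto simp: vec4_def fun_eq_iff)

lemma bil_B_vec4:
  "bil 4 (B m) (vec4 a b c d) (vec4 a' b' c' d') =
     a * a' + int m * a * b' + 2 * int m * a * c' + int m * a * d'
     + b * b' + 3 * b * c' + 3 * b * d' + c * c' + 3 * c * d' + d * d'"
  by (simp add: bil_def sum_lessThan_4 vec4_def list_mat_def algebra_simps)

lemma act_Sig0_basis4: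
  "act_gen 4 M (Sig 0) (basis4 v0 v1 v2 v3) =
     basis4 (\<lambda>t. v1 t - bil 4 M v0 v1 * v0 t) v0 v2 v3"
  by (auto simp: basis4_def fun_eq_iff)

lemma act_Sig1_basis4:
  "act_gen 4 M (Sig 1) (basis4 v0 v1 v2 v3) =
     basis4 v0 (\<lambda>t. v2 t - bil 4 M v1 v2 * v1 t) v1 v3"
  by (auto simp: basis4_def fun_eq_iff)

lemma act_Sig2_basis4:
  "act_gen 4 M (Sig 2) (basis4 v0 v1 v2 v3) =
     basis4 v0 v1 (\<lambda>t. v3 t - bil 4 M v2 v3 * v2 t) v2"
  by (auto simp: basis4_def fun_eq_iff)

lemma act_Eps0_basis4:
  "act_gen 4 M (Eps 0) (basis4 v0 v1 v2 v3) = basis4 (\<lambda>t. - v0 t) v1 v2 v3"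
  by (auto simp: basis4_def fun_eq_iff)

lemma act_Eps3_basis4:
  "act_gen 4 M (Eps 3) (basis4 v0 v1 v2 v3) = basis4 v0 v1 v2 (\<lambda>t. - v3 t)"
  by (auto simp: basis4_def fun_eq_iff)

lemma act_word_B:
  "act_word 4 (B m) mutation_word std_basis =
     basis4 (vec4 (- int m) 3 (-1) 0) (vec4 (- int m) 1 0 0)
            (vec4 (- int m) 0 0 1) (vec4 (-1) 0 0 0)"
  unfolding act_word_def std_basis_eq_basis4
  by (simp only: fold_simps act_Sig0_basis4 act_Sig1_basis4 act_Sig2_basis4
        act_Eps0_basis4 act_Eps3_basis4 uminus_vec4 diff_smult_vec4 bil_B_vec4) simp

lemma gram_act_word_B:
  assumes "i < 4" and "j < 4"
  shows "gram 4 (B m) (act_word 4 (B m) mutation_word std_basis) i j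
           = B' m i j"
  using assms unfolding act_word_B gram_def less_4_cases
  by (auto simp: basis4_def bil_B_vec4 list_mat_def)

theorem proposition2p13:
  fixes m :: nat
  shows "mutation_equivalent 4
     (list_mat [[1, int m, 2 * int m, int m],
                [0, 1, 3, 3],
                [0, 0, 1, 3],
                [0, 0, 0, 1]])
     (list_mat [[1, 3, 6, int m],
                [0, 1, 3, int m],
                [0, 0, 1, int m],
                [0, 0, 0, 1]])"
proof -
  have "obtained_from 4 (B m) (B' m)"
    unfolding obtained_from_def
  proof (intro exI[of _ mutation_word] conjI allI impI)
    show "\<forall>g\<in>set mutation_word. valid_gen 4 g"
      by simp
  qed (rule gram_act_word_B)
  then show ?thesis
    unfolding mutation_equivalent_def ..
qed

end
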